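(* The graph $L_{8,2}$ has a perfect partition; that is, the set of all $8\times 8$ permutation matrices $P$ with $P\le A(L_{8,2})$ entrywise can be partitioned into subsets each of which sums to $A(L_{8,2})$ (each such subset necessarily has $6$ elements).
   Context: $L_{8,2}=K_{8,8}-4K_{2,2}$; its biadjacency matrix $A(L_{8,2})$ is the $8\times 8$ matrix which, written in $2\times 2$ block form $(A_{ij})_{1\le i,j\le 4}$, has $A_{ii}=O_2$ (zero matrix) and $A_{ij}=J_2$ (all-ones) for $i\ne j$. A regular bipartite graph $G$ has a perfect partition if its set of perfect matchings can be partitioned into parts each of which is a $1$-factorization of $G$; in matrix language, the set of permutation matrices $P\le A(G)$ can be partitioned into subsets each summing to $A(G)$. *)

theory Defs
  imports "HOL-Combinatorics.Permutations" "HOL-Library.Disjoint_Sets"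
begin

text \<open>Square n x n matrices with natural entries, indexed by 0..n-1, represented as
  functions nat => nat => nat (entries outside the index range are irrelevant/zero).\<close>

definition perm_matrix :: "nat \<Rightarrow> (nat \<Rightarrow> nat \<Rightarrow> nat) \<Rightarrow> bool" where
  "perm_matrix n P \<longleftrightarrow>
     (\<exists>\<sigma>. \<sigma> permutes {..<n} \<and> P = (\<lambda>i j. if i < n \<and> j < n \<and> \<sigma> i = j then 1 else 0))"

text \<open>Biadjacency matrix of L_{8,2} = K_{8,8} - 4K_{2,2}: 2x2 block form, zero diagonal
  blocks, all-ones off-diagonal blocks.\<close>
definition A_L82 :: "nat \<Rightarrow> nat \<Rightarrow> nat" where
  "A_L82 i j = (if i < 8 \<and> j < 8 \<and> i div 2 \<noteq> j div 2 then 1 else 0)"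

definition perm_matrices_below :: "nat \<Rightarrow> (nat \<Rightarrow> nat \<Rightarrow> nat) \<Rightarrow> (nat \<Rightarrow> nat \<Rightarrow> nat) set" where
  "perm_matrices_below n A = {P. perm_matrix n P \<and> (\<forall>i<n. \<forall>j<n. P i j \<le> A i j)}"

definition has_perfect_partition :: "nat \<Rightarrow> (nat \<Rightarrow> nat \<Rightarrow> nat) \<Rightarrow> bool" where
  "has_perfect_partition n A \<longleftrightarrow>
     (\<exists>\<P>. partition_on (perm_matrices_below n A) \<P> \<and>
          (\<forall>S\<in>\<P>. \<forall>i<n. \<forall>j<n. (\<Sum>P\<in>S. P i j) = A i j))"

end

theory Submission
  imports Defs "HOL-Library.List_Lexorder" "HOL-Library.Multiset"
begin

text \<open>Swapping the two columns of a block preserves A_L82, hence maps permutations below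
  it to such permutations and 1-factorizations to 1-factorizations. The 8 swap patterns fixing
  block 0 act freely, and two permutations lie in the same orbit iff they agree after
  coarsening, which keeps columns 0 and 1 and identifies the two columns of each other block.
  There are 588 coarse rows; an explicit list of 98 1-factorizations whose 588 rows realise
  every coarse row exactly once (checked by evaluation) therefore yields, under all 8 swap
  patterns, 784 1-factorizations partitioning the 4704 permutation matrices.\<close>

text \<open>Conditions are phrased with list_all over [0..<8] so that code_simp can evaluate them.\<close>

definition L82_perm :: "nat list \<Rightarrow> bool" where
  "L82_perm xs \<longleftrightarrow> length xs = 8 \<and> distinct xs \<and>
     list_all (\<lambda>i. xs ! i < 8 \<and> xs ! i div 2 \<noteq> i div 2) [0..<8]"

definition perm_mat :: "nat list \<Rightarrow> nat \<Rightarrow> nat \<Rightarrow> nat" where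
  "perm_mat xs = (\<lambda>i j. if i < 8 \<and> j < 8 \<and> xs ! i = j then 1 else 0)"

definition L82_factorization :: "nat list list \<Rightarrow> bool" where
  "L82_factorization G \<longleftrightarrow> length G = 6 \<and> list_all L82_perm G \<and>
     list_all (\<lambda>i. distinct (map (\<lambda>xs. xs ! i) G)) [0..<8]"

lemma L82_perm_iff:
  "L82_perm xs \<longleftrightarrow> length xs = 8 \<and> distinct xs \<and> (\<forall>i<8. xs ! i < 8 \<and> xs ! i div 2 \<noteq> i div 2)"
  unfolding L82_perm_def list_all_iff by auto

lemma set_L82_perm: "L82_perm xs \<Longrightarrow> set xs = {..<8}"
  by (rule card_subset_eq) (auto simp: L82_perm_iff in_set_conv_nth distinct_card)

lemma inj_on_perm_mat: "inj_on perm_mat (Collect L82_perm)"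
proof (rule inj_onI)
  fix xs ys assume xs: "xs \<in> Collect L82_perm" and ys: "ys \<in> Collect L82_perm"
    and eq: "perm_mat xs = perm_mat ys"
  show "xs = ys"
  proof (rule nth_equalityI)
    show "length xs = length ys" using xs ys by (simp add: L82_perm_iff)
    fix i assume "i < length xs"
    then have "i < 8" "xs ! i < 8" using xs by (auto simp: L82_perm_iff)
    then have "perm_mat xs i (xs ! i) = 1" by (simp add: perm_mat_def)
    then have "perm_mat ys i (xs ! i) = 1" by (simp only: eq)
    then show "xs ! i = ys ! i" by (simp add: perm_mat_def split: if_splits)
  qed
qed

lemma perm_matrices_below_L82: "perm_matrices_below 8 A_L82 = perm_mat ` Collect L82_perm"
proof
  show "perm_matrices_below 8 A_L82 \<subseteq> perm_mat ` Collect L82_perm"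
  proof
    fix P assume "P \<in> perm_matrices_below 8 A_L82"
    then obtain \<sigma> where \<sigma>: "\<sigma> permutes {..<8}"
      and P: "P = (\<lambda>i j. if i < 8 \<and> j < 8 \<and> \<sigma> i = j then 1 else 0)"
      and below: "\<forall>i<8. \<forall>j<8. P i j \<le> A_L82 i j"
      by (auto simp: perm_matrices_below_def perm_matrix_def)
    have \<sigma>_less: "i < 8 \<Longrightarrow> \<sigma> i < 8" for i using permutes_in_image[OF \<sigma>] by simp
    have "L82_perm (map \<sigma> [0..<8])"
      unfolding L82_perm_iff
    proof (intro conjI allI impI)
      show "distinct (map \<sigma> [0..<8])"
        using permutes_inj_on[OF \<sigma>] by (simp add: distinct_map lessThan_atLeast0)
      fix i :: nat assume i: "i < 8"
      then show "map \<sigma> [0..<8] ! i < 8" using \<sigma>_less by simp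
      have "P i (\<sigma> i) \<le> A_L82 i (\<sigma> i)" using below i \<sigma>_less by simp
      then show "map \<sigma> [0..<8] ! i div 2 \<noteq> i div 2"
        using i \<sigma>_less by (simp add: P A_L82_def split: if_splits)
    qed simp
    moreover have "P = perm_mat (map \<sigma> [0..<8])"
      unfolding P perm_mat_def by (intro ext) auto
    ultimately show "P \<in> perm_mat ` Collect L82_perm" by blast
  qed
next
  show "perm_mat ` Collect L82_perm \<subseteq> perm_matrices_below 8 A_L82"
  proof
    fix P assume "P \<in> perm_mat ` Collect L82_perm"
    then obtain xs where xs: "L82_perm xs" and P: "P = perm_mat xs" by blast
    define \<sigma> where "\<sigma> i = (if i < 8 then xs ! i else i)" for i
    have "inj_on \<sigma> {..<8}"
      using xs by (auto simp: inj_on_def \<sigma>_def L82_perm_iff nth_eq_iff_index_eq)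
    moreover have "\<sigma> ` {..<8} \<subseteq> {..<8}" using xs by (auto simp: \<sigma>_def L82_perm_iff)
    ultimately have "bij_betw \<sigma> {..<8} {..<8}"
      by (simp add: bij_betw_def endo_inj_surj)
    then have "\<sigma> permutes {..<8}" by (rule bij_imp_permutes) (simp add: \<sigma>_def)
    moreover have "P = (\<lambda>i j. if i < 8 \<and> j < 8 \<and> \<sigma> i = j then 1 else 0)"
      unfolding P perm_mat_def \<sigma>_def by (intro ext) auto
    ultimately have "perm_matrix 8 P" unfolding perm_matrix_def by blast
    moreover have "\<forall>i<8. \<forall>j<8. P i j \<le> A_L82 i j"
      using xs by (auto simp: P perm_mat_def A_L82_def L82_perm_iff)
    ultimately show "P \<in> perm_matrices_below 8 A_L82" by (simp add: perm_matrices_below_def)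
  qed
qed

lemma card_L82_row_support: "i < 8 \<Longrightarrow> card {j. j < 8 \<and> j div 2 \<noteq> i div (2::nat)} = 6"
proof -
  assume i: "i < 8"
  have "{j. j < 8 \<and> j div 2 \<noteq> i div 2} = {..<8} - {2 * (i div 2), 2 * (i div 2) + 1}"
    by auto
  moreover have "2 * (i div 2) + 1 < 8" using i by presburger
  ultimately show ?thesis by (simp add: card_Diff_subset)
qed

lemma sum_perm_mat_L82_factorization:
  assumes G: "L82_factorization G" and i: "i < 8" and j: "j < 8"
  shows "(\<Sum>P\<in>perm_mat ` set G. P i j) = A_L82 i j"
proof -
  have perms: "\<forall>xs\<in>set G. L82_perm xs" and col: "distinct (map (\<lambda>xs. xs ! i) G)"
    using G i by (auto simp: L82_factorization_def list_all_iff)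
  have column: "set (map (\<lambda>xs. xs ! i) G) = {j. j < 8 \<and> j div 2 \<noteq> i div 2}"
  proof (rule card_subset_eq)
    show "set (map (\<lambda>xs. xs ! i) G) \<subseteq> {j. j < 8 \<and> j div 2 \<noteq> i div 2}"
      using perms i by (auto simp: L82_perm_iff)
    show "card (set (map (\<lambda>xs. xs ! i) G)) = card {j. j < 8 \<and> j div 2 \<noteq> i div 2}"
      using G distinct_card[OF col] card_L82_row_support[OF i]
      by (simp add: L82_factorization_def)
  qed simp
  have "(\<Sum>P\<in>perm_mat ` set G. P i j) = (\<Sum>xs\<in>set G. perm_mat xs i j)"
    using inj_on_subset[OF inj_on_perm_mat] perms by (subst sum.reindex) auto
  also have "\<dots> = card {xs\<in>set G. xs ! i = j}"
    using i j by (simp add: perm_mat_def sum.If_cases Int_def)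
  also have "\<dots> = card ((\<lambda>xs. xs ! i) ` {xs\<in>set G. xs ! i = j})"
    using col by (intro card_image[symmetric]) (auto simp: distinct_map inj_on_def)
  also have "(\<lambda>xs. xs ! i) ` {xs\<in>set G. xs ! i = j} = {j} \<inter> set (map (\<lambda>xs. xs ! i) G)"
    by auto
  finally show ?thesis
    unfolding column using i j by (auto simp: A_L82_def)
qed

definition partner :: "nat \<Rightarrow> nat" where
  "partner x = (if even x then Suc x else x - 1)"

definition swap_blocks :: "(nat \<Rightarrow> bool) \<Rightarrow> nat \<Rightarrow> nat" where
  "swap_blocks f x = (if f (x div 2) then partner x else x)"

lemma partner_div2: "partner x div 2 = x div 2"
  unfolding partner_def by (cases "even x") (auto elim!: evenE oddE)

lemma partner_partner: "partner (partner x) = x"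
  unfolding partner_def by (cases "even x") (auto elim!: evenE oddE)

lemma partner_unique: "x div 2 = y div 2 \<Longrightarrow> x \<noteq> y \<Longrightarrow> y = partner x"
  unfolding partner_def by (cases "even x"; cases "even y") (auto elim!: evenE oddE)

lemma swap_blocks_div2: "swap_blocks f x div 2 = x div 2"
  by (simp add: swap_blocks_def partner_div2)

lemma swap_blocks_swap_blocks: "swap_blocks f (swap_blocks f x) = x"
  by (simp add: swap_blocks_def partner_div2 partner_partner)

lemma inj_swap_blocks: "inj (swap_blocks f)"
  by (metis swap_blocks_swap_blocks injI)

lemma swap_blocks_less: "x < 2 * n \<Longrightarrow> swap_blocks f x < 2 * n"
  by (metis swap_blocks_div2 div_less_iff_less_mult zero_less_numeral mult.commute)

lemma L82_perm_swap_blocks: "L82_perm ys \<Longrightarrow> L82_perm (map (swap_blocks f) ys)"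
  using swap_blocks_less[of _ 4] inj_swap_blocks
  by (auto simp: L82_perm_iff distinct_map swap_blocks_div2 inj_on_def)

lemma L82_factorization_swap_blocks:
  assumes G: "L82_factorization G"
  shows "L82_factorization (map (map (swap_blocks f)) G)"
proof -
  have perms: "\<forall>xs\<in>set G. L82_perm xs" and cols: "\<forall>i<8. distinct (map (\<lambda>xs. xs ! i) G)"
    using G by (auto simp: L82_factorization_def list_all_iff)
  have "distinct (map (\<lambda>xs. xs ! i) (map (map (swap_blocks f)) G))" if i: "i < 8" for i
  proof -
    have "map (\<lambda>xs. xs ! i) (map (map (swap_blocks f)) G) = map (swap_blocks f) (map (\<lambda>xs. xs ! i) G)"
      using perms i by (simp add: L82_perm_iff)
    then show ?thesis
      using cols i inj_on_subset[OF inj_swap_blocks] by (simp only: distinct_map) blast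
  qed
  then show ?thesis
    using G perms L82_perm_swap_blocks by (auto simp: L82_factorization_def list_all_iff)
qed

lemma swap_blocks_eq_on_L82_perm:
  assumes "L82_perm ys" "map (swap_blocks f) ys = map (swap_blocks g) ys" "x < 8"
  shows "swap_blocks f x = swap_blocks g x"
  using assms set_L82_perm[OF assms(1)] by auto

definition coarsen :: "nat \<Rightarrow> nat" where
  "coarsen x = (if x < 2 then x else 2 * (x div 2))"

lemma coarsen_div2: "coarsen x div 2 = x div 2"
  by (simp add: coarsen_def)

lemma coarsen_eqD: "coarsen x = coarsen y \<Longrightarrow> x div 2 = y div 2 \<and> (x < 2 \<longrightarrow> x = y)"
  by (auto simp: coarsen_def split: if_splits)

lemma coarsen_swap_blocks: "\<not> f 0 \<Longrightarrow> coarsen (swap_blocks f x) = coarsen x"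
  using swap_blocks_div2[of f x] by (auto simp: coarsen_def swap_blocks_def div_eq_0_iff[symmetric])

lemma coarsen_eq_imp_swap_blocks:
  assumes xs: "L82_perm xs" and ys: "L82_perm ys" and eq: "map coarsen xs = map coarsen ys"
  shows "\<exists>f. \<not> f 0 \<and> xs = map (swap_blocks f) ys"
proof -
  have len: "length xs = 8" "length ys = 8" and dist: "distinct xs" "distinct ys"
    using xs ys by (auto simp: L82_perm_iff)
  have same_block: "xs ! i div 2 = ys ! i div 2" and fixed_if_low: "xs ! i < 2 \<Longrightarrow> xs ! i = ys ! i"
    if "i < 8" for i
    using coarsen_eqD[of "xs ! i" "ys ! i"] eq len that by (metis nth_map)+
  define f where "f b \<longleftrightarrow> (\<exists>k<8. ys ! k div 2 = b \<and> xs ! k \<noteq> ys ! k)" for b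
  have "\<not> f 0"
    using same_block fixed_if_low by (fastforce simp: f_def div_eq_0_iff)
  moreover have "xs ! i = swap_blocks f (ys ! i)" if i: "i < 8" for i
  proof (cases "xs ! i = ys ! i")
    case False
    then show ?thesis
      using i same_block[OF i] partner_unique[of "ys ! i" "xs ! i"]
      by (auto simp: f_def swap_blocks_def)
  next
    case True
    have "xs ! k = ys ! k" if k: "k < 8" "ys ! k div 2 = ys ! i div 2" for k
    proof (rule ccontr)
      assume ne: "xs ! k \<noteq> ys ! k"
      have "k \<noteq> i" using ne True by auto
      then have "ys ! k = partner (ys ! i)"
        using partner_unique[of "ys ! i" "ys ! k"] dist(2) len(2) k i by (simp add: nth_eq_iff_index_eq)
      moreover have "xs ! k = partner (ys ! k)"
        using partner_unique[of "ys ! k" "xs ! k"] same_block[OF k(1)] ne by simp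
      ultimately have "xs ! k = xs ! i" using True partner_partner by simp
      then show False using \<open>k \<noteq> i\<close> dist(1) len(1) k(1) i by (simp add: nth_eq_iff_index_eq)
    qed
    then have "\<not> f (ys ! i div 2)" by (auto simp: f_def)
    then show ?thesis using True by (simp add: swap_blocks_def)
  qed
  then have "xs = map (swap_blocks f) ys" using len by (intro nth_equalityI) auto
  ultimately show ?thesis by blast
qed

definition coarse_mult :: "nat \<Rightarrow> nat" where
  "coarse_mult v = (if v < 2 then 1 else 2)"

text \<open>The entry appended to pre lies in row length pre. Candidates are tried in increasing
  order, so the result is sorted lexicographically, as msort_coarsen_base requires.\<close>

fun coarse_completions :: "nat \<Rightarrow> nat list \<Rightarrow> nat list list" where
  "coarse_completions 0 pre = [pre]"
| "coarse_completions (Suc n) pre =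
     concat (map (\<lambda>v. coarse_completions n (pre @ [v]))
       (filter (\<lambda>v. v div 2 \<noteq> length pre div 2 \<and> count_list pre v < coarse_mult v) [0, 1, 2, 4, 6]))"

lemma coarse_completions_complete:
  assumes "length ys = n"
    and "\<forall>i<n. ys ! i div 2 \<noteq> (length pre + i) div 2 \<and> ys ! i \<in> {0, 1, 2, 4, 6}"
    and "\<forall>v. count_list (pre @ ys) v \<le> coarse_mult v"
  shows "pre @ ys \<in> set (coarse_completions n pre)"
  using assms
proof (induction n arbitrary: pre ys)
  case 0
  then show ?case by simp
next
  case (Suc n)
  then obtain y ys' where ys: "ys = y # ys'" by (cases ys) auto
  have y: "y div 2 \<noteq> length pre div 2 \<and> y \<in> {0, 1, 2, 4, 6}"
    using Suc.prems(2) ys by (metis add_0_right nth_Cons_0 zero_less_Suc)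
  have count: "\<forall>v. count_list ((pre @ [y]) @ ys') v \<le> coarse_mult v"
    using Suc.prems(3) ys by simp
  then have "count_list pre y < coarse_mult y"
    by (auto dest: spec[of _ y])
  moreover have "(pre @ [y]) @ ys' \<in> set (coarse_completions n (pre @ [y]))"
  proof (rule Suc.IH)
    show "length ys' = n" using Suc.prems(1) ys by simp
    show "\<forall>i<n. ys' ! i div 2 \<noteq> (length (pre @ [y]) + i) div 2 \<and> ys' ! i \<in> {0, 1, 2, 4, 6}"
    proof (intro allI impI)
      fix i assume "i < n"
      then have "Suc i < Suc n" by simp
      then show "ys' ! i div 2 \<noteq> (length (pre @ [y]) + i) div 2 \<and> ys' ! i \<in> {0, 1, 2, 4, 6}"
        using Suc.prems(2) ys by (metis length_append_singleton add_Suc_shift add_Suc_right nth_Cons_Suc)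
    qed
  qed (rule count)
  ultimately have "y \<in> set (filter (\<lambda>v. v div 2 \<noteq> length pre div 2 \<and> count_list pre v < coarse_mult v)
      [0, 1, 2, 4, 6])" and "pre @ y # ys' \<in> set (coarse_completions n (pre @ [y]))"
    using y by auto
  then show ?case
    unfolding ys coarse_completions.simps set_concat set_map by blast
qed

lemma count_coarsen_L82_perm:
  assumes "L82_perm xs"
  shows "count_list (map coarsen xs) v \<le> coarse_mult v"
proof -
  have "count_list (map coarsen xs) v = length (filter (\<lambda>x. coarsen x = v) xs)"
    by (simp add: count_list_eq_length_filter filter_map comp_def eq_commute)
  also have "\<dots> = card (set (filter (\<lambda>x. coarsen x = v) xs))"
    using assms by (metis L82_perm_iff distinct_card distinct_filter)
  also have "\<dots> \<le> card (if v < 2 then {v} else {v, v + 1})"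
    by (rule card_mono) (auto simp: coarsen_def split: if_splits)
  also have "\<dots> \<le> coarse_mult v"
    by (simp add: coarse_mult_def)
  finally show ?thesis .
qed

lemma coarsen_in_coarse_completions:
  assumes xs: "L82_perm xs"
  shows "map coarsen xs \<in> set (coarse_completions 8 [])"
proof -
  have "coarsen x \<in> {0, 1, 2, 4, 6}" if "x < 8" for x
    using that by (auto simp: coarsen_def)
  then have "\<forall>i<8. map coarsen xs ! i div 2 \<noteq> (length [] + i) div 2 \<and> map coarsen xs ! i \<in> {0, 1, 2, 4, 6}"
    using xs by (simp add: L82_perm_iff coarsen_div2)
  moreover have "\<forall>v. count_list ([] @ map coarsen xs) v \<le> coarse_mult v"
    using count_coarsen_L82_perm[OF xs] by simp
  moreover have "length (map coarsen xs) = 8"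
    using xs by (simp add: L82_perm_iff)
  ultimately show ?thesis
    using coarse_completions_complete[of "map coarsen xs" 8 "[]"] by simp
qed

lemma coarse_completions_prefix: "ys \<in> set (coarse_completions n pre) \<Longrightarrow> \<exists>zs. ys = pre @ zs"
  by (induction n arbitrary: pre) fastforce+

lemma distinct_concat_map:
  assumes "distinct vs" "\<And>v. v \<in> set vs \<Longrightarrow> distinct (g v)"
    and "\<And>v w. v \<in> set vs \<Longrightarrow> w \<in> set vs \<Longrightarrow> v \<noteq> w \<Longrightarrow> set (g v) \<inter> set (g w) = {}"
  shows "distinct (concat (map g vs))"
  using assms by (induction vs) fastforce+

lemma distinct_coarse_completions: "distinct (coarse_completions n pre)"
proof (induction n arbitrary: pre)
  case (Suc n)
  have disjoint: "set (coarse_completions n (pre @ [v])) \<inter> set (coarse_completions n (pre @ [w])) = {}"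
    if "v \<noteq> w" for v w
  proof -
    have "(pre @ [v]) @ zs \<noteq> (pre @ [w]) @ zs'" for zs zs'
      using that by simp
    then show ?thesis
      using coarse_completions_prefix[of _ n "pre @ [v]"] coarse_completions_prefix[of _ n "pre @ [w]"]
      by blast
  qed
  show ?case
    unfolding coarse_completions.simps
    by (rule distinct_concat_map) (use Suc.IH disjoint in simp_all)
qed simp

text \<open>A merge sort: List.sort is insertion sort, which is far too slow under code_simp on the
  588 coarsened rows.\<close>

fun merge :: "'a::linorder list \<Rightarrow> 'a list \<Rightarrow> 'a list" where
  "merge [] ys = ys"
| "merge xs [] = xs"
| "merge (x # xs) (y # ys) = (if x \<le> y then x # merge xs (y # ys) else y # merge (x # xs) ys)"

fun merge_pairs :: "'a::linorder list list \<Rightarrow> 'a list list" where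
  "merge_pairs (xs # ys # zss) = merge xs ys # merge_pairs zss"
| "merge_pairs zss = zss"

lemma length_merge_pairs: "length (merge_pairs zss) \<le> length zss"
  by (induction zss rule: merge_pairs.induct) auto

function merge_all :: "'a::linorder list list \<Rightarrow> 'a list" where
  "merge_all [] = []"
| "merge_all [xs] = xs"
| "merge_all (xs # ys # zss) = merge_all (merge_pairs (xs # ys # zss))"
  by pat_completeness auto
termination
  by (relation "measure length") (auto simp: less_Suc_eq_le length_merge_pairs)

definition msort :: "'a::linorder list \<Rightarrow> 'a list" where
  "msort xs = merge_all (map (\<lambda>x. [x]) xs)"

lemma mset_merge: "mset (merge xs ys) = mset xs + mset ys"
  by (induction xs ys rule: merge.induct) auto

lemma mset_merge_pairs: "sum_list (map mset (merge_pairs zss)) = sum_list (map mset zss)"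
  by (induction zss rule: merge_pairs.induct) (auto simp: mset_merge)

lemma mset_merge_all: "mset (merge_all zss) = sum_list (map mset zss)"
proof (induction zss rule: merge_all.induct)
  case (3 xs ys zss)
  then show ?case using mset_merge_pairs[of "xs # ys # zss"] by (simp del: merge_pairs.simps)
qed auto

lemma mset_msort: "mset (msort xs) = mset xs"
  unfolding msort_def mset_merge_all by (induction xs) auto

definition base_factorizations :: "nat list list list" where
  "base_factorizations =
   [[[6,4,5,7,0,2,3,1],[2,5,7,6,1,3,4,0],[3,6,4,5,7,1,0,2],[4,7,1,0,3,6,2,5],[5,2,0,4,6,7,1,3],[7,3,6,1,2,0,5,4]],
    [[6,4,7,1,2,3,0,5],[2,5,6,0,3,7,4,1],[3,2,4,6,7,1,5,0],[4,7,1,5,6,0,3,2],[5,3,0,7,1,6,2,4],[7,6,5,4,0,2,1,3]],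
    [[6,2,4,5,7,3,0,1],[2,3,5,6,1,7,4,0],[3,6,7,0,2,1,5,4],[4,5,1,7,0,6,2,3],[5,7,6,4,3,0,1,2],[7,4,0,1,6,2,3,5]],
    [[4,5,0,6,7,2,3,1],[2,3,5,7,1,6,0,4],[3,7,6,5,2,1,4,0],[5,4,7,0,6,3,1,2],[6,2,1,4,0,7,5,3],[7,6,4,1,3,0,2,5]],
    [[2,4,5,6,3,7,1,0],[3,7,1,5,2,6,0,4],[4,3,6,7,0,1,5,2],[5,2,7,0,6,3,4,1],[6,5,4,1,7,0,2,3],[7,6,0,4,1,2,3,5]],
    [[4,2,6,7,0,1,3,5],[2,3,7,5,1,6,4,0],[3,5,0,4,6,7,1,2],[5,6,4,1,7,2,0,3],[6,7,1,0,2,3,5,4],[7,4,5,6,3,0,2,1]],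
    [[2,6,7,4,0,1,3,5],[3,5,1,6,2,7,4,0],[4,7,5,0,6,3,1,2],[5,3,6,1,7,2,0,4],[6,2,4,7,1,0,5,3],[7,4,0,5,3,6,2,1]],
    [[4,2,6,5,7,0,3,1],[2,3,4,7,0,6,1,5],[3,6,1,4,2,7,5,0],[5,7,0,1,6,2,4,3],[6,5,7,0,1,3,2,4],[7,4,5,6,3,1,0,2]],
    [[2,4,6,5,7,1,0,3],[3,5,1,7,6,0,2,4],[4,2,7,0,3,6,1,5],[5,3,0,6,2,7,4,1],[6,7,4,1,0,3,5,2],[7,6,5,4,1,2,3,0]],
    [[6,2,7,1,0,3,4,5],[2,5,4,6,1,7,0,3],[3,7,6,4,2,0,5,1],[4,3,5,7,6,1,2,0],[5,4,1,0,7,6,3,2],[7,6,0,5,3,2,1,4]],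
    [[6,4,1,7,2,0,3,5],[2,5,0,6,7,1,4,3],[3,6,4,0,1,7,5,2],[4,3,7,5,0,6,2,1],[5,7,6,4,3,2,1,0],[7,2,5,1,6,3,0,4]],
    [[2,4,6,7,0,3,1,5],[3,6,4,5,7,2,0,1],[4,3,7,6,1,0,5,2],[5,2,1,4,6,7,3,0],[6,7,5,0,3,1,2,4],[7,5,0,1,2,6,4,3]],
    [[6,2,4,7,1,0,3,5],[2,5,1,6,7,3,4,0],[3,7,5,0,2,6,1,4],[4,6,0,5,3,7,2,1],[5,4,7,1,6,2,0,3],[7,3,6,4,0,1,5,2]],
    [[4,6,7,5,1,2,3,0],[2,3,0,1,7,6,4,5],[3,7,1,4,6,0,5,2],[5,4,6,7,2,1,0,3],[6,5,4,0,3,7,2,1],[7,2,5,6,0,3,1,4]],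
    [[6,7,1,4,2,0,3,5],[2,6,4,7,3,1,5,0],[3,2,5,0,7,6,1,4],[4,5,7,6,1,2,0,3],[5,3,6,1,0,7,4,2],[7,4,0,5,6,3,2,1]],
    [[2,4,6,1,0,7,3,5],[3,5,7,0,6,1,2,4],[4,2,1,6,7,0,5,3],[5,3,4,7,1,6,0,2],[6,7,0,5,2,3,4,1],[7,6,5,4,3,2,1,0]],
    [[4,6,7,5,1,0,2,3],[2,3,4,7,0,6,5,1],[3,4,6,1,7,2,0,5],[5,7,0,6,3,1,4,2],[6,5,1,0,2,7,3,4],[7,2,5,4,6,3,1,0]],
    [[4,2,6,7,1,3,0,5],[2,6,0,4,3,7,5,1],[3,7,1,5,0,6,2,4],[5,4,7,1,6,2,3,0],[6,3,5,0,7,1,4,2],[7,5,4,6,2,0,1,3]],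
    [[4,5,6,7,2,3,0,1],[2,4,5,6,1,7,3,0],[3,6,1,0,7,2,4,5],[5,7,0,4,3,6,1,2],[6,3,7,5,0,1,2,4],[7,2,4,1,6,0,5,3]],
    [[6,4,1,7,2,3,0,5],[2,6,5,4,0,7,1,3],[3,5,7,1,6,2,4,0],[4,3,0,5,7,6,2,1],[5,7,4,6,1,0,3,2],[7,2,6,0,3,1,5,4]],
    [[2,4,6,0,1,7,5,3],[3,7,0,5,6,1,2,4],[4,5,7,6,3,2,1,0],[5,6,4,7,2,3,0,1],[6,2,1,4,7,0,3,5],[7,3,5,1,0,6,4,2]],
    [[4,2,6,5,7,3,1,0],[2,5,7,6,0,1,4,3],[3,4,0,1,6,7,2,5],[5,7,1,4,3,6,0,2],[6,3,4,7,2,0,5,1],[7,6,5,0,1,2,3,4]],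
    [[4,2,6,7,1,3,5,0],[2,3,1,6,0,7,4,5],[3,6,4,5,7,0,2,1],[5,7,0,4,6,2,1,3],[6,5,7,0,2,1,3,4],[7,4,5,1,3,6,0,2]],
    [[6,2,0,4,7,3,5,1],[2,4,7,5,1,6,3,0],[3,7,5,1,6,0,4,2],[4,3,1,6,0,7,2,5],[5,6,4,7,2,1,0,3],[7,5,6,0,3,2,1,4]],
    [[4,2,5,0,6,7,3,1],[2,7,4,6,1,3,0,5],[3,6,0,1,7,2,5,4],[5,3,7,4,2,6,1,0],[6,5,1,7,3,0,4,2],[7,4,6,5,0,1,2,3]],
    [[6,2,4,5,3,7,0,1],[2,7,5,1,6,0,3,4],[3,6,7,4,0,2,1,5],[4,5,0,6,7,1,2,3],[5,3,1,7,2,6,4,0],[7,4,6,0,1,3,5,2]],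
    [[4,2,6,0,3,7,5,1],[2,3,0,7,6,1,4,5],[3,4,1,5,7,6,0,2],[5,7,4,6,1,3,2,0],[6,5,7,1,0,2,3,4],[7,6,5,4,2,0,1,3]],
    [[4,2,6,0,1,7,5,3],[2,7,1,5,6,0,3,4],[3,6,4,1,7,2,0,5],[5,4,0,7,3,6,1,2],[6,5,7,4,0,3,2,1],[7,3,5,6,2,1,4,0]],
    [[2,6,4,0,7,1,5,3],[3,4,7,5,0,6,2,1],[4,7,1,6,3,2,0,5],[5,2,6,7,1,0,3,4],[6,3,5,1,2,7,4,0],[7,5,0,4,6,3,1,2]],
    [[2,6,4,0,7,1,3,5],[3,7,6,5,0,2,4,1],[4,5,7,6,2,0,1,3],[5,2,1,7,3,6,0,4],[6,3,5,4,1,7,2,0],[7,4,0,1,6,3,5,2]],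
    [[2,3,4,1,6,7,5,0],[3,6,0,4,7,2,1,5],[4,7,5,6,0,3,2,1],[5,4,1,7,2,6,0,3],[6,5,7,0,3,1,4,2],[7,2,6,5,1,0,3,4]],
    [[4,6,7,0,1,2,3,5],[2,7,0,4,6,3,5,1],[3,4,5,1,7,6,0,2],[5,2,1,6,0,7,4,3],[6,5,4,7,3,1,2,0],[7,3,6,5,2,0,1,4]],
    [[4,2,6,5,3,7,0,1],[2,3,7,4,6,0,1,5],[3,7,0,6,1,2,5,4],[5,6,1,7,2,3,4,0],[6,4,5,0,7,1,3,2],[7,5,4,1,0,6,2,3]],
    [[4,6,1,5,0,7,2,3],[2,4,7,6,3,1,5,0],[3,5,4,7,6,2,0,1],[5,3,6,1,7,0,4,2],[6,7,5,0,2,3,1,4],[7,2,0,4,1,6,3,5]],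
    [[4,2,1,5,6,7,0,3],[2,6,4,7,0,3,1,5],[3,5,7,6,1,0,2,4],[5,7,6,0,3,1,4,2],[6,4,5,1,7,2,3,0],[7,3,0,4,2,6,5,1]],
    [[2,6,4,7,1,0,3,5],[3,2,1,5,6,7,4,0],[4,7,5,0,3,6,2,1],[5,3,0,6,7,2,1,4],[6,4,7,1,0,3,5,2],[7,5,6,4,2,1,0,3]],
    [[6,2,7,4,1,3,5,0],[2,6,5,1,3,7,0,4],[3,4,0,7,2,6,1,5],[4,7,6,5,0,1,3,2],[5,3,4,6,7,0,2,1],[7,5,1,0,6,2,4,3]],
    [[2,6,4,0,3,7,5,1],[3,5,7,1,0,6,4,2],[4,3,5,7,6,2,1,0],[5,7,0,6,2,1,3,4],[6,4,1,5,7,0,2,3],[7,2,6,4,1,3,0,5]],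
    [[6,7,4,5,0,1,2,3],[2,4,0,7,1,6,3,5],[3,5,6,1,2,7,4,0],[4,6,1,0,7,3,5,2],[5,3,7,4,6,2,0,1],[7,2,5,6,3,0,1,4]],
    [[2,6,4,7,0,3,5,1],[3,4,6,5,1,7,0,2],[4,3,7,1,6,0,2,5],[5,7,0,6,3,2,1,4],[6,2,5,4,7,1,3,0],[7,5,1,0,2,6,4,3]],
    [[4,6,1,0,7,2,3,5],[2,4,6,7,3,0,5,1],[3,7,4,5,6,1,2,0],[5,2,7,4,0,6,1,3],[6,3,5,1,2,7,0,4],[7,5,0,6,1,3,4,2]],
    [[2,3,6,4,0,7,5,1],[3,5,4,7,6,1,2,0],[4,6,7,5,1,2,0,3],[5,7,1,6,2,0,3,4],[6,4,5,0,7,3,1,2],[7,2,0,1,3,6,4,5]],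
    [[6,4,1,5,2,7,3,0],[2,3,6,1,7,0,5,4],[3,7,4,0,1,6,2,5],[4,2,5,7,6,3,0,1],[5,6,7,4,0,2,1,3],[7,5,0,6,3,1,4,2]],
    [[4,6,7,1,2,3,0,5],[2,3,4,5,6,7,1,0],[3,2,6,7,0,1,5,4],[5,4,1,6,7,0,3,2],[6,7,5,0,3,2,4,1],[7,5,0,4,1,6,2,3]],
    [[6,7,1,4,2,0,5,3],[2,6,4,7,3,1,0,5],[3,4,5,0,6,7,2,1],[4,5,7,6,1,2,3,0],[5,3,0,1,7,6,4,2],[7,2,6,5,0,3,1,4]],
    [[6,4,7,5,1,0,2,3],[2,6,1,7,0,3,4,5],[3,5,4,6,2,7,0,1],[4,2,5,1,7,6,3,0],[5,7,6,0,3,2,1,4],[7,3,0,4,6,1,5,2]],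
    [[2,6,4,5,3,7,1,0],[3,4,7,6,0,1,2,5],[4,3,5,1,7,6,0,2],[5,2,1,7,6,0,3,4],[6,7,0,4,1,2,5,3],[7,5,6,0,2,3,4,1]],
    [[4,5,6,0,2,7,3,1],[2,6,7,1,0,3,4,5],[3,7,4,6,1,0,5,2],[5,3,0,7,6,1,2,4],[6,4,1,5,7,2,0,3],[7,2,5,4,3,6,1,0]],
    [[4,6,7,1,2,0,5,3],[2,5,0,6,3,7,4,1],[3,4,6,7,1,2,0,5],[5,7,1,4,6,3,2,0],[6,2,5,0,7,1,3,4],[7,3,4,5,0,6,1,2]],
    [[6,4,7,5,0,2,1,3],[2,3,1,0,6,7,5,4],[3,5,0,1,7,6,4,2],[4,6,5,7,3,1,2,0],[5,7,6,4,2,0,3,1],[7,2,4,6,1,3,0,5]],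
    [[2,4,0,5,6,7,3,1],[3,2,6,7,1,0,5,4],[4,5,7,0,3,6,1,2],[5,6,1,4,7,2,0,3],[6,7,5,1,2,3,4,0],[7,3,4,6,0,1,2,5]],
    [[6,4,5,1,2,7,3,0],[2,7,6,5,1,3,0,4],[3,2,4,7,6,0,1,5],[4,3,0,6,7,1,5,2],[5,6,7,0,3,2,4,1],[7,5,1,4,0,6,2,3]],
    [[6,7,4,1,0,2,3,5],[2,5,6,0,7,1,4,3],[3,6,7,4,1,0,5,2],[4,3,5,7,2,6,0,1],[5,4,1,6,3,7,2,0],[7,2,0,5,6,3,1,4]],
    [[2,6,4,5,7,3,1,0],[3,7,6,1,2,0,5,4],[4,5,7,0,1,6,2,3],[5,3,0,7,6,2,4,1],[6,2,1,4,3,7,0,5],[7,4,5,6,0,1,3,2]],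
    [[4,6,5,0,7,2,3,1],[2,5,7,4,0,6,1,3],[3,4,0,7,6,1,2,5],[5,2,6,1,3,7,4,0],[6,7,4,5,1,3,0,2],[7,3,1,6,2,0,5,4]],
    [[2,3,6,0,1,7,4,5],[3,5,4,6,7,0,2,1],[4,6,5,7,2,3,1,0],[5,4,7,1,3,6,0,2],[6,7,1,4,0,2,5,3],[7,2,0,5,6,1,3,4]],
    [[4,5,6,1,2,7,3,0],[2,3,1,5,7,6,0,4],[3,2,4,7,6,0,5,1],[5,6,7,0,1,3,4,2],[6,7,0,4,3,1,2,5],[7,4,5,6,0,2,1,3]],
    [[6,4,5,0,7,2,3,1],[2,7,6,4,3,0,1,5],[3,2,0,7,1,6,5,4],[4,3,7,5,6,1,0,2],[5,6,4,1,0,7,2,3],[7,5,1,6,2,3,4,0]],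
    [[4,2,6,5,7,1,3,0],[2,3,1,7,6,0,4,5],[3,6,5,4,2,7,0,1],[5,4,7,6,0,3,1,2],[6,7,0,1,3,2,5,4],[7,5,4,0,1,6,2,3]],
    [[4,2,6,7,3,1,5,0],[2,5,4,6,0,7,1,3],[3,7,0,5,1,6,4,2],[5,6,7,4,2,3,0,1],[6,4,1,0,7,2,3,5],[7,3,5,1,6,0,2,4]],
    [[4,2,5,6,0,7,1,3],[2,5,6,1,7,0,3,4],[3,4,7,0,6,2,5,1],[5,3,4,7,1,6,2,0],[6,7,0,5,3,1,4,2],[7,6,1,4,2,3,0,5]],
    [[4,2,1,0,6,7,5,3],[2,7,6,4,3,1,0,5],[3,4,5,7,0,6,2,1],[5,6,0,1,7,2,3,4],[6,3,7,5,1,0,4,2],[7,5,4,6,2,3,1,0]],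
    [[4,2,6,7,3,0,1,5],[2,5,1,0,6,7,3,4],[3,6,5,1,7,2,4,0],[5,4,7,6,0,3,2,1],[6,7,4,5,2,1,0,3],[7,3,0,4,1,6,5,2]],
    [[6,2,7,4,0,3,5,1],[2,4,1,7,3,6,0,5],[3,7,4,5,6,0,1,2],[4,6,5,0,1,7,2,3],[5,3,6,1,7,2,4,0],[7,5,0,6,2,1,3,4]],
    [[6,4,7,5,1,2,3,0],[2,7,4,6,3,0,5,1],[3,6,5,1,0,7,2,4],[4,2,1,7,6,3,0,5],[5,3,6,0,7,1,4,2],[7,5,0,4,2,6,1,3]],
    [[4,2,6,5,1,7,3,0],[2,7,0,4,6,1,5,3],[3,4,5,0,7,6,1,2],[5,3,7,6,2,0,4,1],[6,5,1,7,0,3,2,4],[7,6,4,1,3,2,0,5]],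
    [[6,2,4,0,3,7,1,5],[2,3,0,4,7,6,5,1],[3,7,5,6,0,1,4,2],[4,5,1,7,6,3,2,0],[5,6,7,1,2,0,3,4],[7,4,6,5,1,2,0,3]],
    [[6,2,0,4,3,7,1,5],[2,4,6,1,7,0,5,3],[3,7,4,5,0,6,2,1],[4,5,1,7,6,3,0,2],[5,6,7,0,2,1,3,4],[7,3,5,6,1,2,4,0]],
    [[4,5,6,7,2,0,3,1],[2,3,0,5,6,7,1,4],[3,4,5,1,7,6,2,0],[5,7,1,6,0,2,4,3],[6,2,7,4,3,1,0,5],[7,6,4,0,1,3,5,2]],
    [[6,2,4,5,1,7,0,3],[2,7,5,6,0,1,3,4],[3,5,7,4,2,6,1,0],[4,6,1,7,3,0,5,2],[5,4,6,0,7,3,2,1],[7,3,0,1,6,2,4,5]],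
    [[4,5,6,1,7,0,2,3],[2,6,7,4,1,3,5,0],[3,2,4,5,6,7,0,1],[5,7,1,6,0,2,3,4],[6,3,0,7,2,1,4,5],[7,4,5,0,3,6,1,2]],
    [[2,6,0,7,3,1,4,5],[3,7,4,5,1,6,0,2],[4,3,1,6,7,2,5,0],[5,4,6,1,0,7,2,3],[6,5,7,4,2,0,3,1],[7,2,5,0,6,3,1,4]],
    [[6,2,1,4,3,7,5,0],[2,3,7,5,6,0,4,1],[3,4,6,0,7,2,1,5],[4,6,5,7,1,3,0,2],[5,7,4,6,0,1,2,3],[7,5,0,1,2,6,3,4]],
    [[6,2,1,0,7,3,4,5],[2,3,6,5,1,7,0,4],[3,4,7,6,0,2,5,1],[4,7,5,1,2,6,3,0],[5,6,4,7,3,0,1,2],[7,5,0,4,6,1,2,3]],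
    [[2,6,4,0,7,3,5,1],[3,5,1,6,0,7,2,4],[4,2,6,7,3,1,0,5],[5,7,0,4,1,6,3,2],[6,4,7,5,2,0,1,3],[7,3,5,1,6,2,4,0]],
    [[6,2,1,7,0,3,4,5],[2,4,6,5,7,1,3,0],[3,5,7,4,6,0,2,1],[4,6,5,0,2,7,1,3],[5,7,4,1,3,6,0,2],[7,3,0,6,1,2,5,4]],
    [[6,2,4,0,1,7,3,5],[2,7,5,1,0,6,4,3],[3,5,1,6,7,2,0,4],[4,6,0,7,2,3,5,1],[5,3,7,4,6,0,1,2],[7,4,6,5,3,1,2,0]],
    [[6,2,1,4,7,3,5,0],[2,4,7,5,3,6,0,1],[3,5,4,7,6,0,1,2],[4,7,0,6,1,2,3,5],[5,3,6,1,0,7,2,4],[7,6,5,0,2,1,4,3]],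
    [[6,2,7,4,3,0,5,1],[2,7,6,0,1,3,4,5],[3,4,1,5,7,6,2,0],[4,5,0,1,6,7,3,2],[5,6,4,7,0,2,1,3],[7,3,5,6,2,1,0,4]],
    [[4,6,7,5,0,2,3,1],[2,5,6,0,3,7,1,4],[3,7,5,1,2,6,4,0],[5,3,4,6,7,1,0,2],[6,4,0,7,1,3,2,5],[7,2,1,4,6,0,5,3]],
    [[2,4,1,0,6,7,5,3],[3,7,0,4,1,6,2,5],[4,6,5,1,7,0,3,2],[5,2,6,7,0,3,1,4],[6,3,7,5,2,1,4,0],[7,5,4,6,3,2,0,1]],
    [[2,3,4,1,6,7,0,5],[3,7,1,4,0,6,5,2],[4,6,7,5,2,1,3,0],[5,4,6,7,1,0,2,3],[6,2,5,0,7,3,4,1],[7,5,0,6,3,2,1,4]],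
    [[2,4,1,6,0,7,5,3],[3,5,7,1,2,6,0,4],[4,3,5,7,6,0,1,2],[5,6,0,4,7,2,3,1],[6,7,4,5,3,1,2,0],[7,2,6,0,1,3,4,5]],
    [[2,4,1,6,7,0,5,3],[3,6,0,5,2,7,1,4],[4,2,7,0,1,6,3,5],[5,7,4,1,6,3,2,0],[6,3,5,7,0,1,4,2],[7,5,6,4,3,2,0,1]],
    [[2,4,6,5,7,3,0,1],[3,6,7,4,0,1,5,2],[4,2,0,7,3,6,1,5],[5,3,1,0,6,7,2,4],[6,7,5,1,2,0,4,3],[7,5,4,6,1,2,3,0]],
    [[2,4,6,0,1,7,3,5],[3,6,1,5,7,2,0,4],[4,3,5,7,2,6,1,0],[5,7,0,4,6,1,2,3],[6,5,7,1,3,0,4,2],[7,2,4,6,0,3,5,1]],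
    [[2,3,6,0,7,1,4,5],[3,6,4,5,1,7,2,0],[4,5,0,7,6,2,1,3],[5,2,7,1,3,6,0,4],[6,7,5,4,2,0,3,1],[7,4,1,6,0,3,5,2]],
    [[2,3,6,4,0,7,1,5],[3,7,1,0,2,6,5,4],[4,5,7,6,3,1,2,0],[5,6,0,7,1,2,4,3],[6,2,4,5,7,0,3,1],[7,4,5,1,6,3,0,2]],
    [[2,3,6,4,7,1,5,0],[3,7,5,0,6,2,1,4],[4,6,0,1,2,7,3,5],[5,2,7,6,0,3,4,1],[6,5,4,7,1,0,2,3],[7,4,1,5,3,6,0,2]],
    [[2,3,6,1,0,7,4,5],[3,5,4,6,7,1,0,2],[4,7,1,5,2,6,3,0],[5,2,7,0,6,3,1,4],[6,4,0,7,3,2,5,1],[7,6,5,4,1,0,2,3]],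
    [[2,3,6,4,7,1,0,5],[3,7,5,6,2,0,1,4],[4,5,0,7,3,6,2,1],[5,6,7,1,0,3,4,2],[6,2,4,0,1,7,5,3],[7,4,1,5,6,2,3,0]],
    [[2,4,0,6,1,7,5,3],[3,5,7,4,6,2,1,0],[4,6,5,7,2,0,3,1],[5,7,6,1,0,3,2,4],[6,3,4,5,7,1,0,2],[7,2,1,0,3,6,4,5]],
    [[2,4,5,6,7,3,1,0],[3,6,7,4,1,0,2,5],[4,5,6,7,0,1,3,2],[5,7,0,1,2,6,4,3],[6,2,4,0,3,7,5,1],[7,3,1,5,6,2,0,4]],
    [[2,4,0,6,7,3,5,1],[3,6,5,7,1,2,4,0],[4,7,6,5,2,1,0,3],[5,3,4,0,6,7,1,2],[6,5,7,1,3,0,2,4],[7,2,1,4,0,6,3,5]],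
    [[2,4,6,5,7,0,1,3],[3,6,0,1,2,7,4,5],[4,2,5,7,0,6,3,1],[5,3,7,0,6,1,2,4],[6,7,1,4,3,2,5,0],[7,5,4,6,1,3,0,2]],
    [[2,3,4,6,7,1,0,5],[3,5,6,7,1,0,4,2],[4,7,1,0,2,6,5,3],[5,2,0,1,6,7,3,4],[6,4,7,5,3,2,1,0],[7,6,5,4,0,3,2,1]],
    [[2,4,0,6,7,3,1,5],[3,6,1,7,2,0,5,4],[4,2,6,5,1,7,0,3],[5,7,4,0,6,1,3,2],[6,5,7,1,3,2,4,0],[7,3,5,4,0,6,2,1]],
    [[2,3,4,0,6,7,5,1],[3,4,7,6,2,1,0,5],[4,5,0,7,1,6,3,2],[5,7,6,1,3,2,4,0],[6,2,5,4,7,0,1,3],[7,6,1,5,0,3,2,4]],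
    [[2,4,6,7,3,0,1,5],[3,6,1,4,7,2,5,0],[4,5,7,0,6,1,2,3],[5,3,0,6,1,7,4,2],[6,7,4,5,2,3,0,1],[7,2,5,1,0,6,3,4]]]"

lemma L82_factorization_base: "list_all L82_factorization base_factorizations"
  unfolding base_factorizations_def by code_simp

lemma msort_coarsen_base: "msort (map (map coarsen) (concat base_factorizations)) = coarse_completions 8 []"
  unfolding base_factorizations_def by code_simp

lemma L82_perm_base_row:
  assumes "F \<in> set base_factorizations" "ys \<in> set F"
  shows "L82_perm ys"
  using L82_factorization_base assms by (auto simp: list_all_iff L82_factorization_def)

lemma coarsen_base_rows:
  "distinct (map (map coarsen) (concat base_factorizations))"
  "set (map (map coarsen) (concat base_factorizations)) = set (coarse_completions 8 [])"
proof -
  have eq: "mset (map (map coarsen) (concat base_factorizations)) = mset (coarse_completions 8 [])"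
    by (metis mset_msort msort_coarsen_base)
  then show "distinct (map (map coarsen) (concat base_factorizations))"
    using distinct_coarse_completions mset_eq_imp_distinct_iff by blast
  show "set (map (map coarsen) (concat base_factorizations)) = set (coarse_completions 8 [])"
    using eq mset_eq_setD by blast
qed

lemma coarsen_eq_base_rows:
  assumes "F \<in> set base_factorizations" "ys \<in> set F"
    and "G \<in> set base_factorizations" "zs \<in> set G"
    and "map coarsen ys = map coarsen zs"
  shows "ys = zs" "F = G"
proof -
  have distinct: "distinct (concat base_factorizations)"
    and inj: "inj_on (map coarsen) (set (concat base_factorizations))"
    using coarsen_base_rows(1) distinct_map by blast+
  have "ys \<in> set (concat base_factorizations)" "zs \<in> set (concat base_factorizations)"
    using assms(1-4) by auto
  then show "ys = zs"
    using inj_onD[OF inj assms(5)] by blast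
  have "set F \<inter> set G = {}" if "F \<noteq> G"
    using distinct assms(1,3) that unfolding distinct_concat_iff by blast
  then show "F = G"
    using \<open>ys = zs\<close> assms(2,4) by blast
qed

lemma ex_base_row_coarsen_eq:
  assumes "L82_perm xs"
  obtains F ys where "F \<in> set base_factorizations" "ys \<in> set F" "map coarsen ys = map coarsen xs"
proof -
  have "map coarsen xs \<in> map coarsen ` set (concat base_factorizations)"
    using coarsen_in_coarse_completions[OF assms] coarsen_base_rows(2) by simp
  then show thesis
    using that by auto
qed

definition swapped_parts :: "(nat \<Rightarrow> nat \<Rightarrow> nat) set set" where
  "swapped_parts =
     {perm_mat ` set (map (map (swap_blocks f)) F) | f F. \<not> f 0 \<and> F \<in> set base_factorizations}"

lemma sum_swapped_parts:
  assumes "S \<in> swapped_parts" "i < 8" "j < 8"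
  shows "(\<Sum>P\<in>S. P i j) = A_L82 i j"
proof -
  obtain f F where S: "S = perm_mat ` set (map (map (swap_blocks f)) F)"
    and F: "F \<in> set base_factorizations"
    using assms(1) unfolding swapped_parts_def by blast
  have "L82_factorization (map (map (swap_blocks f)) F)"
    using L82_factorization_base F L82_factorization_swap_blocks by (simp add: list_all_iff)
  then show ?thesis
    unfolding S using sum_perm_mat_L82_factorization assms(2,3) by blast
qed

lemma Union_swapped_parts: "\<Union> swapped_parts = perm_matrices_below 8 A_L82"
proof
  show "\<Union> swapped_parts \<subseteq> perm_matrices_below 8 A_L82"
    using L82_perm_base_row L82_perm_swap_blocks
    by (auto simp: swapped_parts_def perm_matrices_below_L82)
  show "perm_matrices_below 8 A_L82 \<subseteq> \<Union> swapped_parts"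
  proof
    fix P assume "P \<in> perm_matrices_below 8 A_L82"
    then obtain xs where xs: "L82_perm xs" and P: "P = perm_mat xs"
      by (auto simp: perm_matrices_below_L82)
    obtain F ys where F: "F \<in> set base_factorizations" "ys \<in> set F"
      and coarse: "map coarsen ys = map coarsen xs"
      using ex_base_row_coarsen_eq[OF xs] .
    obtain f where "\<not> f 0" "xs = map (swap_blocks f) ys"
      using coarsen_eq_imp_swap_blocks[OF xs L82_perm_base_row[OF F] coarse[symmetric]] by blast
    then show "P \<in> \<Union> swapped_parts"
      using F by (auto simp: swapped_parts_def P)
  qed
qed

lemma empty_notin_swapped_parts: "{} \<notin> swapped_parts"
  using L82_factorization_base by (auto simp: swapped_parts_def list_all_iff L82_factorization_def)

lemma swapped_parts_eq:
  assumes "S \<in> swapped_parts" "T \<in> swapped_parts" "P \<in> S" "P \<in> T"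
  shows "S = T"
proof -
  obtain f F where S: "S = perm_mat ` set (map (map (swap_blocks f)) F)"
    and f: "\<not> f 0" and F: "F \<in> set base_factorizations"
    using assms(1) unfolding swapped_parts_def by blast
  obtain g G where T: "T = perm_mat ` set (map (map (swap_blocks g)) G)"
    and g: "\<not> g 0" and G: "G \<in> set base_factorizations"
    using assms(2) unfolding swapped_parts_def by blast
  obtain ys where ys: "ys \<in> set F" "P = perm_mat (map (swap_blocks f) ys)"
    using assms(3) S by auto
  obtain zs where zs: "zs \<in> set G" "P = perm_mat (map (swap_blocks g) zs)"
    using assms(4) T by auto
  have perm_ys: "L82_perm ys" and perm_zs: "L82_perm zs"
    using L82_perm_base_row F G ys(1) zs(1) by blast+
  have swapped_eq: "map (swap_blocks f) ys = map (swap_blocks g) zs"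
    using inj_onD[OF inj_on_perm_mat] ys(2) zs(2) L82_perm_swap_blocks[OF perm_ys]
      L82_perm_swap_blocks[OF perm_zs] by simp
  have "map coarsen ys = map coarsen (map (swap_blocks f) ys)"
    using coarsen_swap_blocks[of f, OF f] by simp
  also have "\<dots> = map coarsen zs"
    using coarsen_swap_blocks[of g, OF g] by (simp add: swapped_eq)
  finally have "ys = zs" "F = G"
    using coarsen_eq_base_rows F G ys(1) zs(1) by blast+
  have "swap_blocks f x = swap_blocks g x" if "x < 8" for x
    using swap_blocks_eq_on_L82_perm[OF perm_ys _ that] swapped_eq \<open>ys = zs\<close> by simp
  then have "\<forall>ws\<in>set F. \<forall>x\<in>set ws. swap_blocks f x = swap_blocks g x"
    using L82_perm_base_row[OF F] set_L82_perm by blast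
  then have "map (map (swap_blocks f)) F = map (map (swap_blocks g)) F"
    by simp
  then show "S = T"
    unfolding S T \<open>F = G\<close>[symmetric] by (simp only:)
qed

lemma disjoint_swapped_parts: "disjoint swapped_parts"
proof (rule disjointI)
  fix S T assume "S \<in> swapped_parts" "T \<in> swapped_parts" "S \<noteq> T"
  then show "S \<inter> T = {}"
    using swapped_parts_eq by blast
qed

theorem theorem3p1:
  shows "has_perfect_partition 8 A_L82"
proof -
  have "partition_on (perm_matrices_below 8 A_L82) swapped_parts"
    unfolding partition_on_def
    using Union_swapped_parts disjoint_swapped_parts empty_notin_swapped_parts by blast
  then show ?thesis
    unfolding has_perfect_partition_def using sum_swapped_parts by blast
qed

end
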